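(* There exists a (deterministic) set $D\subseteq[0,90^\circ]$ of full Lebesgue measure such that for every $\alpha\in D$ and every $z\in\mathbb{Z}^2$, with $\mathbb{P}$-probability one there exists at most one $\alpha$-geodesic starting at $z$ (in $R(z)$).
   Context: $\mathcal W=(w(z),z\in\mathbb{Z}^2)$ i.i.d. exponential of mean 1, law $\mathbb{P}$. For $z\le z'$ coordinatewise, $G(z,z')$ is the maximum over up/right nearest-neighbor paths from $z$ to $z'$ of the sum of weights on the path (endpoints included); the a.s. unique maximizing path is the geodesic $\pi(z,z')$. $R(z)=\bigcup_{z'\in z+\mathbb{N}^2}\pi(z,z')$, $\mathbb{N}=\{0,1,\dots\}$. A semi-infinite up/right path $(z_k)_{k\ge1}$ starting at $z_1=z$ is a uni-geodesic if for all $i<j$ the geodesic from $z_i$ to $z_j$ is $(z_i,\dots,z_j)$; it has direction $\alpha$ if $z_k/|z_k|\to e^{i\alpha}=(\cos\alpha,\sin\alpha)$; an $\alpha$-geodesic is a uni-geodesic with direction $\alpha$. *)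

theory Defs
  imports "HOL-Probability.Probability"
begin

type_synonym site = "int \<times> int"
type_synonym env = "site \<Rightarrow> real"

definition env_law :: "env measure" where
  "env_law = PiM UNIV (\<lambda>_::site. density lborel (exponential_density 1))"

definition ur_step :: "site \<Rightarrow> site \<Rightarrow> bool" where
  "ur_step a b \<longleftrightarrow> b = (fst a + 1, snd a) \<or> b = (fst a, snd a + 1)"

definition ur_paths :: "site \<Rightarrow> site \<Rightarrow> site list set" where
  "ur_paths z z' = {xs. xs \<noteq> [] \<and> hd xs = z \<and> last xs = z' \<and>
      (\<forall>i. Suc i < length xs \<longrightarrow> ur_step (xs ! i) (xs ! Suc i))}"

definition path_weight :: "env \<Rightarrow> site list \<Rightarrow> real" where
  "path_weight w xs = sum_list (map w xs)"

definition is_geodesic :: "env \<Rightarrow> site \<Rightarrow> site \<Rightarrow> site list \<Rightarrow> bool" where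
  "is_geodesic w z z' xs \<longleftrightarrow> xs \<in> ur_paths z z' \<and>
      (\<forall>ys \<in> ur_paths z z'. ys \<noteq> xs \<longrightarrow> path_weight w ys < path_weight w xs)"

definition uni_geodesic :: "env \<Rightarrow> site \<Rightarrow> (nat \<Rightarrow> site) \<Rightarrow> bool" where
  "uni_geodesic w z p \<longleftrightarrow> p 0 = z \<and> (\<forall>k. ur_step (p k) (p (Suc k))) \<and>
      (\<forall>i j. i < j \<longrightarrow> is_geodesic w (p i) (p j) (map p [i..<Suc j]))"

definition to_R2 :: "site \<Rightarrow> real \<times> real" where
  "to_R2 z = (real_of_int (fst z), real_of_int (snd z))"

definition has_direction :: "(nat \<Rightarrow> site) \<Rightarrow> real \<Rightarrow> bool" where
  "has_direction p \<alpha> \<longleftrightarrow>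
     ((\<lambda>k. (1 / norm (to_R2 (p k))) *\<^sub>R to_R2 (p k)) \<longlongrightarrow> (cos \<alpha>, sin \<alpha>)) sequentially"

definition alpha_geodesic :: "env \<Rightarrow> real \<Rightarrow> site \<Rightarrow> (nat \<Rightarrow> site) \<Rightarrow> bool" where
  "alpha_geodesic w \<alpha> z p \<longleftrightarrow> uni_geodesic w z p \<and> has_direction p \<alpha>"

end

theory Submission
  imports Defs
begin

(* Call a site v a split site of direction alpha for the geodesic tree R(z) if both subtrees of
   R(z) behind the two edges leaving v (up and right) contain, on every high enough antidiagonal,
   sites whose directions come arbitrarily close to alpha. Two distinct alpha-geodesics from z
   separate at some site, which is then a split site of direction alpha. By planarity the upper
   subtree lies to the left of the right one on every antidiagonal, so a site splits in at most
   one direction of [0, pi/2]: for fixed z and v the split events are disjoint in alpha, and only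
   countably many alpha give one of them positive probability. Discarding these alpha for the
   countably many pairs (z, v) leaves a set of full measure. *)

lemma (in finite_measure) countable_nonnull_disjoint_family:
  assumes "F ` I \<subseteq> sets M" and "disjoint_family_on F I"
  shows "countable {i\<in>I. measure M (F i) \<noteq> 0}"
proof (rule summable_countable_real, rule nonneg_bdd_above_summable_on)
  show "bdd_above ((\<lambda>X. \<Sum>i\<in>X. measure M (F i)) ` {X. X \<subseteq> I \<and> finite X})"
  proof (rule bdd_aboveI2)
    fix X assume X: "X \<in> {X. X \<subseteq> I \<and> finite X}"
    then have "(\<Sum>i\<in>X. measure M (F i)) = measure M (\<Union>i\<in>X. F i)"
      using assms by (intro finite_measure_finite_Union[symmetric])
        (auto intro: disjoint_family_on_mono)
    also have "\<dots> \<le> measure M (space M)"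
      using X assms(1) by (intro bounded_measure)
    finally show "(\<Sum>i\<in>X. measure M (F i)) \<le> measure M (space M)" .
  qed
qed simp

lemma LIMSEQ_dist_less_inverse_Suc:
  fixes f :: "nat \<Rightarrow> 'a::metric_space"
  assumes "\<And>n. dist (f n) l < 1 / real (Suc n)"
  shows "f \<longlonglongrightarrow> l"
proof -
  have "(\<lambda>n. dist (f n) l) \<longlonglongrightarrow> 0"
    by (rule LIMSEQ_norm_0) (use assms in simp)
  then show ?thesis
    by (rule tendsto_dist_iff[THEN iffD2])
qed

lemma prob_space_env_law: "prob_space env_law"
proof -
  interpret product_prob_space "\<lambda>_::site. density lborel (exponential_density 1)" UNIV
    by (simp add: product_prob_space_def product_sigma_finite_def prob_space_exponential_density
        prob_space_imp_sigma_finite product_prob_space_axioms_def)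
  show ?thesis unfolding env_law_def by (rule P.prob_space_axioms)
qed

lemma space_env_law [simp]: "space env_law = UNIV"
  by (simp add: env_law_def space_PiM)

lemma measurable_env_component [measurable]: "(\<lambda>w. w s) \<in> borel_measurable env_law"
proof -
  have "(\<lambda>w. w s) \<in> measurable env_law (density lborel (exponential_density 1))"
    unfolding env_law_def by (rule measurable_component_singleton) simp
  then show ?thesis by (simp cong: measurable_cong_sets)
qed

lemma measurable_path_weight [measurable]: "(\<lambda>w. path_weight w xs) \<in> borel_measurable env_law"
  by (induction xs) (simp_all add: path_weight_def)

lemma measurable_is_geodesic [measurable]: "Measurable.pred env_law (\<lambda>w. is_geodesic w a b xs)"
  unfolding is_geodesic_def by measurable

definition level :: "site \<Rightarrow> int" where
  "level a = fst a + snd a"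

definition step_up :: "site \<Rightarrow> site" where
  "step_up v = (fst v, snd v + 1)"

definition step_right :: "site \<Rightarrow> site" where
  "step_right v = (fst v + 1, snd v)"

lemma ur_paths_iff_successively:
  "xs \<in> ur_paths z z' \<longleftrightarrow> xs \<noteq> [] \<and> hd xs = z \<and> last xs = z' \<and> successively ur_step xs"
  by (simp add: ur_paths_def successively_conv_nth)

lemma level_ur_path:
  assumes "successively ur_step xs" and "i < length xs"
  shows "level (xs ! i) = level (hd xs) + int i"
  using assms
proof (induction i)
  case 0
  then show ?case by (simp add: hd_conv_nth)
next
  case (Suc i)
  then have "ur_step (xs ! i) (xs ! Suc i)" by (simp add: successively_nth)
  with Suc show ?case by (auto simp: ur_step_def level_def)
qed

lemma ur_paths_stay_ordered:
  assumes xs: "successively ur_step xs" and ys: "successively ur_step ys"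
    and same_level: "level (hd xs) = level (hd ys)"
    and ordered: "fst (xs ! i) < fst (ys ! i)"
    and disjoint: "\<And>j. i \<le> j \<Longrightarrow> j \<le> k \<Longrightarrow> xs ! j \<noteq> ys ! j"
    and "i \<le> k" "k < length xs" "k < length ys"
  shows "fst (xs ! k) < fst (ys ! k)"
  using \<open>i \<le> k\<close> \<open>k < length xs\<close> \<open>k < length ys\<close> disjoint
proof (induction k rule: dec_induct)
  case base
  show ?case by (fact ordered)
next
  case (step k)
  then have IH: "fst (xs ! k) < fst (ys ! k)" by simp
  have "ur_step (xs ! k) (xs ! Suc k)" "ur_step (ys ! k) (ys ! Suc k)"
    using step.prems xs ys by (simp_all add: successively_nth)
  with IH have le: "fst (xs ! Suc k) \<le> fst (ys ! Suc k)"
    by (auto simp: ur_step_def)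
  have "level (xs ! Suc k) = level (ys ! Suc k)"
    using level_ur_path[OF xs] level_ur_path[OF ys] same_level step.prems by simp
  moreover have "xs ! Suc k \<noteq> ys ! Suc k"
    using step by simp
  ultimately show ?case
    using le by (auto simp: level_def prod_eq_iff)
qed

lemma is_geodesic_unique:
  assumes "is_geodesic w a b xs" and "is_geodesic w a b ys"
  shows "xs = ys"
  using assms unfolding is_geodesic_def by force

lemma path_weight_append: "path_weight w (xs @ ys) = path_weight w xs + path_weight w ys"
  by (simp add: path_weight_def)

lemma is_geodesicD:
  assumes "is_geodesic w z a xs"
  shows "xs \<noteq> []" "hd xs = z" "last xs = a" "successively ur_step xs"
  using assms by (simp_all add: is_geodesic_def ur_paths_iff_successively)

lemma level_nth_is_geodesic:
  assumes "is_geodesic w z a xs" and "i < length xs"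
  shows "level (xs ! i) = level z + int i"
  using level_ur_path[OF is_geodesicD(4)[OF assms(1)] assms(2)] is_geodesicD(2)[OF assms(1)]
  by simp

lemma level_endpoint_is_geodesic:
  assumes "is_geodesic w z a xs"
  shows "level a = level z + int (length xs - 1)"
  using level_nth_is_geodesic[OF assms, of "length xs - 1"] is_geodesicD[OF assms]
  by (simp add: last_conv_nth)

text \<open>Exchange argument: a heavier path to xs ! j followed by the rest of xs would be a heavier
  path to b.\<close>
lemma is_geodesic_take:
  assumes geo: "is_geodesic w a b xs" and j: "j < length xs"
  shows "is_geodesic w a (xs ! j) (take (Suc j) xs)"
proof -
  let ?pre = "take (Suc j) xs" and ?suf = "drop (Suc j) xs"
  note xs = is_geodesicD[OF geo]
  have xs_split: "xs = ?pre @ ?suf" by simp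
  have pre: "?pre \<noteq> []" "hd ?pre = a" "last ?pre = xs ! j"
    using xs j by (simp_all add: hd_take, simp add: take_Suc_conv_app_nth)
  have pre_steps: "successively ur_step ?pre" and suf_steps: "successively ur_step ?suf"
    using xs(4) xs_split successively_append_iff[of ur_step ?pre ?suf] by metis+
  have junction: "?suf = [] \<or> ur_step (xs ! j) (hd ?suf)"
    using xs(4) by (cases "Suc j < length xs") (simp_all add: hd_drop_conv_nth successively_nth)
  have "path_weight w ys < path_weight w ?pre"
    if ys: "ys \<in> ur_paths a (xs ! j)" "ys \<noteq> ?pre" for ys
  proof -
    have ys': "ys \<noteq> []" "hd ys = a" "last ys = xs ! j" "successively ur_step ys"
      using ys(1) by (simp_all add: ur_paths_iff_successively)
    have "last (ys @ ?suf) = last (?pre @ ?suf)"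
      by (simp only: last_append ys'(3) pre(3))
    with xs_split ys' suf_steps junction have "ys @ ?suf \<in> ur_paths a b"
      by (auto simp: ur_paths_iff_successively successively_append_iff xs(3)[symmetric])
    moreover have "ys @ ?suf \<noteq> xs"
      using ys(2) xs_split by (metis append_same_eq)
    ultimately have "path_weight w (ys @ ?suf) < path_weight w (?pre @ ?suf)"
      using geo xs_split unfolding is_geodesic_def by auto
    then show ?thesis
      unfolding path_weight_append by linarith
  qed
  moreover have "?pre \<in> ur_paths a (xs ! j)"
    using pre pre_steps by (simp add: ur_paths_iff_successively)
  ultimately show ?thesis
    unfolding is_geodesic_def by blast
qed

lemma geodesics_coalesce:
  assumes "is_geodesic w z a xs" and "is_geodesic w z b ys"
    and "j < length xs" and "j < length ys" and "xs ! j = ys ! j"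
  shows "take (Suc j) xs = take (Suc j) ys"
  using assms is_geodesic_take is_geodesic_unique by metis

text \<open>The sites whose geodesic from z uses the edge from v to d, i.e. the subtree of R(z)
  behind that edge.\<close>
definition geodesic_branch :: "env \<Rightarrow> site \<Rightarrow> site \<Rightarrow> site \<Rightarrow> site set" where
  "geodesic_branch w z v d =
     {a. \<exists>xs m. is_geodesic w z a xs \<and> Suc m < length xs \<and> xs ! m = v \<and> xs ! Suc m = d}"

lemma geodesic_branches_ordered:
  assumes a: "a \<in> geodesic_branch w z v (step_up v)"
    and b: "b \<in> geodesic_branch w z v (step_right v)"
    and level_eq: "level a = level b"
  shows "fst a < fst b"
proof -
  obtain xs m where xs: "is_geodesic w z a xs" "Suc m < length xs"
    and xs_v: "xs ! m = v" "xs ! Suc m = step_up v"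
    using a by (auto simp: geodesic_branch_def)
  obtain ys m' where ys: "is_geodesic w z b ys" "Suc m' < length ys"
    and ys_v: "ys ! m' = v" "ys ! Suc m' = step_right v"
    using b by (auto simp: geodesic_branch_def)
  have "m' = m"
    using level_nth_is_geodesic[OF xs(1), of m] level_nth_is_geodesic[OF ys(1), of m']
      xs ys xs_v ys_v by simp
  define k where "k = length xs - 1"
  have len: "length ys - 1 = k"
    using level_endpoint_is_geodesic[OF xs(1)] level_endpoint_is_geodesic[OF ys(1)] level_eq
    by (simp add: k_def)
  have "fst (xs ! k) < fst (ys ! k)"
  proof (rule ur_paths_stay_ordered[OF is_geodesicD(4)[OF xs(1)] is_geodesicD(4)[OF ys(1)],
        where i = "Suc m"])
    show "fst (xs ! Suc m) < fst (ys ! Suc m)"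
      using xs_v ys_v \<open>m' = m\<close> by (simp add: step_up_def step_right_def)
    fix j assume "Suc m \<le> j" "j \<le> k"
    show "xs ! j \<noteq> ys ! j"
    proof
      assume "xs ! j = ys ! j"
      then have "take (Suc j) xs = take (Suc j) ys"
        using geodesics_coalesce[OF xs(1) ys(1)] \<open>j \<le> k\<close> len xs(2) ys(2) k_def by simp
      then have "take (Suc j) xs ! Suc m = take (Suc j) ys ! Suc m"
        by (rule arg_cong)
      with \<open>Suc m \<le> j\<close> have "xs ! Suc m = ys ! Suc m"
        by simp
      then show False
        using xs_v ys_v \<open>m' = m\<close> by (simp add: step_up_def step_right_def)
    qed
  qed (use is_geodesicD[OF xs(1)] is_geodesicD[OF ys(1)] xs ys len k_def in auto)
  then show ?thesis
    using is_geodesicD[OF xs(1)] is_geodesicD[OF ys(1)] len by (simp add: k_def last_conv_nth)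
qed


definition direction :: "site \<Rightarrow> real \<times> real" where
  "direction a = (1 / norm (to_R2 a)) *\<^sub>R to_R2 a"

definition cross :: "real \<times> real \<Rightarrow> real \<times> real \<Rightarrow> real" where
  "cross p q = fst p * snd q - snd p * fst q"

lemma cross_scaleR: "cross (c *\<^sub>R p) (d *\<^sub>R q) = c * d * cross p q"
  by (simp add: cross_def algebra_simps)

lemma cross_cos_sin: "cross (cos a, sin a) (cos b, sin b) = sin (b - a)"
  by (simp add: cross_def sin_diff mult.commute)

lemma tendsto_cross [tendsto_intros]:
  assumes "(f \<longlongrightarrow> p) F" and "(g \<longlongrightarrow> q) F"
  shows "((\<lambda>x. cross (f x) (g x)) \<longlongrightarrow> cross p q) F"
  unfolding cross_def using assms by (intro tendsto_intros)

lemma cross_direction_nonpos: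
  assumes "level a = level b" and "0 \<le> level a" and "fst a < fst b"
  shows "cross (direction a) (direction b) \<le> 0"
proof -
  have "fst a * snd b - snd a * fst b = level a * (fst a - fst b)"
    using assms(1) unfolding level_def by algebra
  then have "cross (to_R2 a) (to_R2 b) = of_int (level a * (fst a - fst b))"
    by (simp add: cross_def to_R2_def flip: of_int_mult of_int_diff)
  also have "\<dots> \<le> 0"
    using assms(2,3) by (simp add: mult_nonneg_nonpos)
  finally show ?thesis
    by (simp add: direction_def cross_scaleR divide_nonpos_nonneg)
qed


text \<open>Quantifying over antidiagonals s lets two branches be compared on a common level, and
  the quantifiers range over countable types, which keeps the event measurable.\<close>
definition branch_has_direction :: "env \<Rightarrow> site \<Rightarrow> site \<Rightarrow> site \<Rightarrow> real \<Rightarrow> bool" where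
  "branch_has_direction w z v d \<alpha> \<longleftrightarrow>
     (\<forall>n. \<exists>N. \<forall>s\<ge>N. \<exists>a\<in>geodesic_branch w z v d.
        level a = s \<and> dist (direction a) (cos \<alpha>, sin \<alpha>) < 1 / real (Suc n))"

definition splits_in_direction :: "env \<Rightarrow> site \<Rightarrow> site \<Rightarrow> real \<Rightarrow> bool" where
  "splits_in_direction w z v \<alpha> \<longleftrightarrow>
     branch_has_direction w z v (step_up v) \<alpha> \<and> branch_has_direction w z v (step_right v) \<alpha>"

lemma branch_points_on_common_levels:
  assumes up: "branch_has_direction w z v (step_up v) \<alpha>"
    and right: "branch_has_direction w z v (step_right v) \<beta>"
  obtains a b :: "nat \<Rightarrow> site" where
    "\<And>n. a n \<in> geodesic_branch w z v (step_up v)"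
    "\<And>n. b n \<in> geodesic_branch w z v (step_right v)"
    "\<And>n. level (a n) = level (b n)" "\<And>n. 0 \<le> level (a n)"
    "\<And>n. dist (direction (a n)) (cos \<alpha>, sin \<alpha>) < 1 / real (Suc n)"
    "\<And>n. dist (direction (b n)) (cos \<beta>, sin \<beta>) < 1 / real (Suc n)"
proof -
  have "\<exists>a b. a \<in> geodesic_branch w z v (step_up v) \<and> b \<in> geodesic_branch w z v (step_right v) \<and>
      level a = level b \<and> 0 \<le> level a \<and>
      dist (direction a) (cos \<alpha>, sin \<alpha>) < 1 / real (Suc n) \<and>
      dist (direction b) (cos \<beta>, sin \<beta>) < 1 / real (Suc n)" for n
  proof -
    obtain N1 where N1: "\<forall>s\<ge>N1. \<exists>a\<in>geodesic_branch w z v (step_up v).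
        level a = s \<and> dist (direction a) (cos \<alpha>, sin \<alpha>) < 1 / real (Suc n)"
      using up unfolding branch_has_direction_def by blast
    obtain N2 where N2: "\<forall>s\<ge>N2. \<exists>b\<in>geodesic_branch w z v (step_right v).
        level b = s \<and> dist (direction b) (cos \<beta>, sin \<beta>) < 1 / real (Suc n)"
      using right unfolding branch_has_direction_def by blast
    define s where "s = max 0 (max N1 N2)"
    have "0 \<le> s" "N1 \<le> s" "N2 \<le> s"
      by (simp_all add: s_def)
    then obtain a b where "a \<in> geodesic_branch w z v (step_up v)" "level a = s"
        "dist (direction a) (cos \<alpha>, sin \<alpha>) < 1 / real (Suc n)"
        "b \<in> geodesic_branch w z v (step_right v)" "level b = s"
        "dist (direction b) (cos \<beta>, sin \<beta>) < 1 / real (Suc n)"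
      using N1 N2 by blast
    with \<open>0 \<le> s\<close> show ?thesis
      by (intro exI[of _ a] exI[of _ b]) simp
  qed
  then show ?thesis
    using that by metis
qed

text \<open>On common antidiagonals the upper branch lies to the left of the right branch, and this
  ordering of directions survives in the limit.\<close>
lemma sin_diff_nonpos_if_branch_directions:
  assumes up: "branch_has_direction w z v (step_up v) \<alpha>"
    and right: "branch_has_direction w z v (step_right v) \<beta>"
  shows "sin (\<beta> - \<alpha>) \<le> 0"
proof -
  obtain a b where ab: "\<And>n. a n \<in> geodesic_branch w z v (step_up v)"
    "\<And>n. b n \<in> geodesic_branch w z v (step_right v)"
    "\<And>n. level (a n) = level (b n)" "\<And>n. 0 \<le> level (a n)"
    "\<And>n. dist (direction (a n)) (cos \<alpha>, sin \<alpha>) < 1 / real (Suc n)"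
    "\<And>n. dist (direction (b n)) (cos \<beta>, sin \<beta>) < 1 / real (Suc n)"
    using branch_points_on_common_levels[OF up right] by blast
  have "(\<lambda>n. cross (direction (a n)) (direction (b n))) \<longlonglongrightarrow> sin (\<beta> - \<alpha>)"
    unfolding cross_cos_sin[symmetric]
    by (intro tendsto_cross LIMSEQ_dist_less_inverse_Suc ab(5,6))
  moreover have "cross (direction (a n)) (direction (b n)) \<le> 0" for n
    using ab(1-4) geodesic_branches_ordered by (intro cross_direction_nonpos) blast+
  ultimately show ?thesis
    using LIMSEQ_le_const2 by blast
qed

lemma splits_in_direction_unique:
  assumes "splits_in_direction w z v \<alpha>" and "splits_in_direction w z v \<beta>"
    and "\<alpha> \<in> {0..pi/2}" and "\<beta> \<in> {0..pi/2}"
  shows "\<alpha> = \<beta>"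
proof -
  have "sin (\<beta> - \<alpha>) \<le> 0" and "sin (\<alpha> - \<beta>) \<le> 0"
    using assms(1,2) sin_diff_nonpos_if_branch_directions
    unfolding splits_in_direction_def by blast+
  moreover have "sin (\<alpha> - \<beta>) = - sin (\<beta> - \<alpha>)"
    using sin_minus[of "\<beta> - \<alpha>"] by simp
  ultimately have "sin (\<beta> - \<alpha>) = 0"
    by linarith
  moreover have "- pi < \<beta> - \<alpha>" "\<beta> - \<alpha> < pi"
    using assms(3,4) pi_gt_zero unfolding atLeastAtMost_iff by linarith+
  ultimately have "\<beta> - \<alpha> = 0"
    using sin_eq_0_pi by blast
  then show ?thesis
    by simp
qed

lemma level_uni_geodesic:
  assumes "uni_geodesic w z p"
  shows "level (p k) = level z + int k"
proof (induction k)
  case 0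
  then show ?case using assms by (simp add: uni_geodesic_def)
next
  case (Suc k)
  moreover have "ur_step (p k) (p (Suc k))"
    using assms by (simp add: uni_geodesic_def)
  ultimately show ?case by (auto simp: ur_step_def level_def)
qed

lemma uni_geodesic_in_branch:
  assumes "uni_geodesic w z p" and "m < k"
  shows "p k \<in> geodesic_branch w z (p m) (p (Suc m))"
proof -
  have "0 < k"
    using \<open>m < k\<close> by simp
  then have "is_geodesic w (p 0) (p k) (map p [0..<Suc k])"
    using assms(1) unfolding uni_geodesic_def by blast
  moreover have "p 0 = z"
    using assms(1) unfolding uni_geodesic_def by blast
  ultimately have "is_geodesic w z (p k) (map p [0..<Suc k])"
    by simp
  with \<open>m < k\<close> show ?thesis
    unfolding geodesic_branch_def
    by (intro CollectI exI[of _ "map p [0..<Suc k]"] exI[of _ m]) (simp del: upt_Suc)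
qed

lemma branch_has_direction_if_alpha_geodesic:
  assumes "alpha_geodesic w \<alpha> z p"
  shows "branch_has_direction w z (p m) (p (Suc m)) \<alpha>"
  unfolding branch_has_direction_def
proof
  fix n
  have "(\<lambda>k. direction (p k)) \<longlonglongrightarrow> (cos \<alpha>, sin \<alpha>)"
    using assms by (simp add: alpha_geodesic_def has_direction_def direction_def)
  moreover have "0 < 1 / real (Suc n)"
    by simp
  ultimately obtain K where K: "\<And>k. k \<ge> K \<Longrightarrow> dist (direction (p k)) (cos \<alpha>, sin \<alpha>) < 1 / real (Suc n)"
    unfolding lim_sequentially by blast
  have geo: "uni_geodesic w z p"
    using assms by (simp add: alpha_geodesic_def)
  show "\<exists>N. \<forall>s\<ge>N. \<exists>a\<in>geodesic_branch w z (p m) (p (Suc m)).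
      level a = s \<and> dist (direction a) (cos \<alpha>, sin \<alpha>) < 1 / real (Suc n)"
  proof (intro exI allI impI)
    fix s assume "level z + int (Suc m + K) \<le> s"
    define k where "k = nat (s - level z)"
    have "s = level z + int k" "Suc m + K \<le> k"
      using \<open>level z + int (Suc m + K) \<le> s\<close> by (simp_all add: k_def)
    then show "\<exists>a\<in>geodesic_branch w z (p m) (p (Suc m)).
        level a = s \<and> dist (direction a) (cos \<alpha>, sin \<alpha>) < 1 / real (Suc n)"
      using uni_geodesic_in_branch[OF geo] level_uni_geodesic[OF geo] K
      by (intro bexI[of _ "p k"]) auto
  qed
qed

lemma alpha_geodesics_split:
  assumes p: "alpha_geodesic w \<alpha> z p" and q: "alpha_geodesic w \<alpha> z q" and "p \<noteq> q"
  shows "\<exists>v. splits_in_direction w z v \<alpha>"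
proof -
  have geo: "uni_geodesic w z p" "uni_geodesic w z q"
    using p q by (simp_all add: alpha_geodesic_def)
  define d where "d = (LEAST k. p k \<noteq> q k)"
  have "\<exists>k. p k \<noteq> q k"
    using \<open>p \<noteq> q\<close> by auto
  then have "p d \<noteq> q d"
    unfolding d_def by (rule LeastI_ex)
  have before: "\<And>k. k < d \<Longrightarrow> p k = q k"
    unfolding d_def using not_less_Least by blast
  have "p 0 = z" "q 0 = z"
    using geo unfolding uni_geodesic_def by blast+
  with \<open>p d \<noteq> q d\<close> have "d \<noteq> 0"
    by (cases d) simp_all
  then obtain m where "d = Suc m"
    using not0_implies_Suc by blast
  then have "p m = q m" and "p (Suc m) \<noteq> q (Suc m)"
    using before \<open>p d \<noteq> q d\<close> by simp_all
  moreover have "ur_step (p m) (p (Suc m))" "ur_step (q m) (q (Suc m))"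
    using geo unfolding uni_geodesic_def by blast+
  ultimately have "p (Suc m) = step_up (p m) \<and> q (Suc m) = step_right (p m) \<or>
      q (Suc m) = step_up (p m) \<and> p (Suc m) = step_right (p m)"
    by (auto simp: ur_step_def step_up_def step_right_def)
  then show ?thesis
    using branch_has_direction_if_alpha_geodesic[OF p, of m]
      branch_has_direction_if_alpha_geodesic[OF q, of m] \<open>p m = q m\<close>
    unfolding splits_in_direction_def by (intro exI[of _ "p m"]) auto
qed

lemma measurable_in_geodesic_branch [measurable]:
  "Measurable.pred env_law (\<lambda>w. a \<in> geodesic_branch w z v d)"
  unfolding geodesic_branch_def mem_Collect_eq by measurable

lemma measurable_splits_in_direction [measurable]:
  "Measurable.pred env_law (\<lambda>w. splits_in_direction w z v \<alpha>)"
  unfolding splits_in_direction_def branch_has_direction_def Bex_def by measurable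

lemma sets_splits_in_direction: "{w. splits_in_direction w z v \<alpha>} \<in> sets env_law"
  using measurable_splits_in_direction unfolding pred_def by simp

lemma countable_directions_splitting_with_positive_probability:
  "countable {\<alpha> \<in> {0..pi/2}. measure env_law {w. splits_in_direction w z v \<alpha>} \<noteq> 0}"
proof -
  interpret prob_space env_law
    by (rule prob_space_env_law)
  show ?thesis
  proof (rule countable_nonnull_disjoint_family)
    show "(\<lambda>\<alpha>. {w. splits_in_direction w z v \<alpha>}) ` {0..pi/2} \<subseteq> events"
      using sets_splits_in_direction by blast
    show "disjoint_family_on (\<lambda>\<alpha>. {w. splits_in_direction w z v \<alpha>}) {0..pi/2}"
      using splits_in_direction_unique unfolding disjoint_family_on_def by blast
  qed
qed

lemma AE_alpha_geodesic_unique: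
  assumes "\<And>v. measure env_law {w. splits_in_direction w z v \<alpha>} = 0"
  shows "AE w in env_law. \<forall>p q. alpha_geodesic w \<alpha> z p \<and> alpha_geodesic w \<alpha> z q \<longrightarrow> p = q"
proof -
  interpret prob_space env_law
    by (rule prob_space_env_law)
  have "AE w in env_law. w \<notin> {w. splits_in_direction w z v \<alpha>}" for v
    using assms sets_splits_in_direction prob_eq_0 by blast
  then have "AE w in env_law. \<forall>v. \<not> splits_in_direction w z v \<alpha>"
    by (simp add: AE_all_countable)
  then show ?thesis
    by eventually_elim (use alpha_geodesics_split in blast)
qed

theorem proposition8:
  shows "\<exists>D. D \<subseteq> {0..pi/2} \<and> {0..pi/2} - D \<in> null_sets lebesgue \<and>
    (\<forall>\<alpha>\<in>D. \<forall>z::site. AE w in env_law.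
       \<forall>p q. alpha_geodesic w \<alpha> z p \<and> alpha_geodesic w \<alpha> z q \<longrightarrow> p = q)"
proof -
  define C where "C = {\<alpha> \<in> {0..pi/2}. \<exists>z v. measure env_law {w. splits_in_direction w z v \<alpha>} \<noteq> 0}"
  have "C = (\<Union>(z, v). {\<alpha> \<in> {0..pi/2}. measure env_law {w. splits_in_direction w z v \<alpha>} \<noteq> 0})"
    unfolding C_def by blast
  then have "countable C"
    using countable_directions_splitting_with_positive_probability by auto
  then have "C \<in> null_sets lebesgue"
    by (intro null_sets_completionI countable_imp_null_set_lborel)
  moreover have "{0..pi/2} - ({0..pi/2} - C) = C"
    by (auto simp: C_def)
  moreover have "\<forall>\<alpha>\<in>{0..pi/2} - C. \<forall>z. AE w in env_law.
      \<forall>p q. alpha_geodesic w \<alpha> z p \<and> alpha_geodesic w \<alpha> z q \<longrightarrow> p = q"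
    unfolding C_def by (blast intro: AE_alpha_geodesic_unique)
  ultimately show ?thesis
    by (intro exI[of _ "{0..pi/2} - C"]) auto
qed

end
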